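(* Let $r\ge1$, let $\kappa\ge\max\{\tfrac32m_2-1,2\}$, and let $U_0\in\mathcal X_{m_2}$. Then for every time step $\tau>0$, the iterates of the rescaled ETDRK$r$ scheme ($U^0=U_0$, $U^{n+1}=W_r^n(\tau)$) satisfy $\|U^n(\boldsymbol x)\|_{\rm F}\le\sqrt{m_2}$ for all $n\ge1$ and all $\boldsymbol x\in\Omega$.
   Context: Let $d\in\{1,2,3\}$ and let $\Omega\subset\mathbb{R}^d$ be a rectangular box, all functions on $\Omega$ being $\Omega$-periodic. Let $m_1\ge m_2\ge1$ be integers, $\varepsilon>0$, $\kappa>0$. $\|\cdot\|_{\rm F}$ is the Frobenius norm. For $U\in\mathbb{R}^{m_1\times m_2}$, $f(U)=U-UU^\top U$ and $\mathcal N[U]=\kappa U+f(U)$ (applied pointwise to functions). $\mathcal X$ is the Banach space of continuous $\Omega$-periodic functions $\overline\Omega\to\mathbb{R}^{m_1\times m_2}$ with norm $\|W\|_{\mathcal X}=\max_{\boldsymbol x}\|W(\boldsymbol x)\|_{\rm F}$, and $\mathcal X_{m_2}=\{W\in\mathcal X:\|W\|_{\mathcal X}\le\sqrt{m_2}\}$. $\mathcal L_\kappa=\varepsilon^2\Delta-\kappa\mathcal I$ with periodic boundary conditions, acting componentwise, and $e^{t\mathcal L_\kappa}=e^{-\kappa t}e^{t\varepsilon^2\Delta}$ with $e^{t\varepsilon^2\Delta}$ the periodic heat semigroup. Rescaled ETDRK scheme: for each $j\ge1$ fix nodes $0=a_{j,0}<a_{j,1}<\dots<a_{j,j}=1$.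 Given a time step $\tau>0$ and $U^n\in\mathcal X$, define for $s\in[0,\tau]$: $W_1^n(s)=e^{s\mathcal L_\kappa}U^n+\int_0^s e^{(s-\sigma)\mathcal L_\kappa}\mathcal N[U^n]\,\mathrm d\sigma$. Recursively for $j\ge1$: let $P_j^n(s,\boldsymbol x)$ be the unique polynomial in $s$ of degree $\le j$ with coefficients in $\mathbb{R}^{m_1\times m_2}$ (depending on $\boldsymbol x$) such that $P_j^n(0,\boldsymbol x)=\mathcal N[U^n(\boldsymbol x)]$ and $P_j^n(a_{j,k}\tau,\boldsymbol x)=\mathcal N[W_j^n(a_{j,k}\tau,\boldsymbol x)]$ for $k=1,\dots,j$; let $\alpha_j^n(\boldsymbol x)=\min\{\kappa\sqrt{m_2}/\max_{s\in[0,\tau]}\|P_j^n(s,\boldsymbol x)\|_{\rm F},\,1\}$ (taken to be $1$ if the maximum is $0$), $\widetilde P_j^n(s,\boldsymbol x)=\alpha_j^n(\boldsymbol x)P_j^n(s,\boldsymbol x)$, and $W_{j+1}^n(s)=e^{s\mathcal L_\kappa}U^n+\int_0^s e^{(s-\sigma)\mathcal L_\kappa}\widetilde P_j^n(\sigma)\,\mathrm d\sigma$. The rescaled ETDRK$r$ scheme is $U^0=U_0$, $U^{n+1}=W_r^n(\tau)$ for $n\ge0$. *)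

theory Defs
  imports "HOL-Analysis.Analysis"
begin

text \<open>Matrices in R^(m1 x m2) are represented as real^'m2^'m1 (rows indexed by 'm1).
  Points of R^d are real^'d.\<close>

definition frob_norm :: "real^'m2^'m1 \<Rightarrow> real" where
  "frob_norm A = sqrt (\<Sum>i\<in>UNIV. \<Sum>j\<in>UNIV. (A$i$j)^2)"

definition fnl :: "real^'m2^'m1 \<Rightarrow> real^'m2^'m1" where
  "fnl U = U - U ** transpose U ** U"

definition Nop :: "real \<Rightarrow> real^'m2^'m1 \<Rightarrow> real^'m2^'m1" where
  "Nop \<kappa> U = \<kappa> *\<^sub>R U + fnl U"

definition heat_kernel :: "real \<Rightarrow> real \<Rightarrow> real^'d \<Rightarrow> real" where
  "heat_kernel eps t z =
     (4 * pi * eps\<^sup>2 * t) powr (- real CARD('d) / 2) * exp (- ((norm z)\<^sup>2) / (4 * eps\<^sup>2 * t))"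

text \<open>Periodic heat semigroup e^(t eps^2 Delta), acting on periodic functions on R^d
  (the periodic extension of a function on the box) by convolution with the heat kernel.\<close>
definition heat_sg :: "real \<Rightarrow> real \<Rightarrow> (real^'d \<Rightarrow> 'v::euclidean_space) \<Rightarrow> real^'d \<Rightarrow> 'v" where
  "heat_sg eps t g x = (if t = 0 then g x else integral UNIV (\<lambda>y. heat_kernel eps t (x - y) *\<^sub>R g y))"

definition semigroupL :: "real \<Rightarrow> real \<Rightarrow> real \<Rightarrow> (real^'d \<Rightarrow> 'v::euclidean_space) \<Rightarrow> real^'d \<Rightarrow> 'v" where
  "semigroupL eps \<kappa> t g x = exp (- \<kappa> * t) *\<^sub>R heat_sg eps t g x"

definition interp_poly :: "(nat \<Rightarrow> real) \<Rightarrow> (nat \<Rightarrow> 'v::real_vector) \<Rightarrow> nat \<Rightarrow> real \<Rightarrow> 'v" where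
  "interp_poly t y j s = (\<Sum>k\<le>j. (\<Prod>l\<in>{..j} - {k}. (s - t l) / (t k - t l)) *\<^sub>R y k)"

definition rescale :: "real \<Rightarrow> real \<Rightarrow> real \<Rightarrow> (real \<Rightarrow> real^'m2^'m1) \<Rightarrow> real" where
  "rescale \<kappa> m \<tau> P = (let M = (SUP s\<in>{0..\<tau>}. frob_norm (P s)) in
     if M = 0 then 1 else min (\<kappa> * sqrt m / M) 1)"

text \<open>etd_stage eps kappa a tau U j = W_(j+1)^n (as function of s and x), where U = U^n.\<close>
primrec etd_stage :: "real \<Rightarrow> real \<Rightarrow> (nat \<Rightarrow> nat \<Rightarrow> real) \<Rightarrow> real \<Rightarrow>
    (real^'d \<Rightarrow> real^'m2^'m1) \<Rightarrow> nat \<Rightarrow> real \<Rightarrow> real^'d \<Rightarrow> real^'m2^'m1" where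
  "etd_stage eps \<kappa> a \<tau> U 0 =
     (\<lambda>s x. semigroupL eps \<kappa> s U x
        + integral {0..s} (\<lambda>\<sigma>. semigroupL eps \<kappa> (s - \<sigma>) (\<lambda>y. Nop \<kappa> (U y)) x))"
| "etd_stage eps \<kappa> a \<tau> U (Suc j) =
     (let P = (\<lambda>\<sigma> y. interp_poly (\<lambda>k. a (Suc j) k * \<tau>)
                  (\<lambda>k. if k = 0 then Nop \<kappa> (U y)
                        else Nop \<kappa> (etd_stage eps \<kappa> a \<tau> U j (a (Suc j) k * \<tau>) y))
                  (Suc j) \<sigma>);
          Pt = (\<lambda>\<sigma> y. rescale \<kappa> (real CARD('m2)) \<tau> (\<lambda>\<sigma>'. P \<sigma>' y) *\<^sub>R P \<sigma> y)
      in (\<lambda>s x. semigroupL eps \<kappa> s U x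
            + integral {0..s} (\<lambda>\<sigma>. semigroupL eps \<kappa> (s - \<sigma>) (Pt \<sigma>) x)))"

primrec etd_iter :: "real \<Rightarrow> real \<Rightarrow> (nat \<Rightarrow> nat \<Rightarrow> real) \<Rightarrow> real \<Rightarrow> nat \<Rightarrow>
    (real^'d \<Rightarrow> real^'m2^'m1) \<Rightarrow> nat \<Rightarrow> real^'d \<Rightarrow> real^'m2^'m1" where
  "etd_iter eps \<kappa> a \<tau> r U0 0 = U0"
| "etd_iter eps \<kappa> a \<tau> r U0 (Suc n) = etd_stage eps \<kappa> a \<tau> (etd_iter eps \<kappa> a \<tau> r U0 n) (r - 1) \<tau>"

end

theory Submission
  imports Defs "HOL-Probability.Probability"
begin

text \<open>Each stage of the scheme has the Duhamel form
  W(s) = e^(sL) U + \<integral>_0^s e^((s-\<sigma>)L) G(\<sigma>) d\<sigma>  with  e^(tL) = e^(-\<kappa>t) e^(t\<epsilon>^2\<Delta>).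
  The heat kernel is a probability density, so the heat semigroup does not increase
  sup-norm bounds; hence |U| \<le> M and |G| \<le> \<kappa>M give
  |W(s)| \<le> e^(-\<kappa>s) M + (1 - e^(-\<kappa>s)) M = M.
  In the first stage G = \<kappa>U + f(U), and |U|_F \<le> \<surd>m2 implies |\<kappa>U + f(U)|_F \<le> \<kappa>\<surd>m2:
  writing f(U) = -U (U^T U - I), submultiplicativity of the Frobenius norm bounds |f(U)|_F^2
  by |U|_F^2 |U^T U - I|_F^2, which the cross term 2\<kappa>\<langle>U, f(U)\<rangle> absorbs.
  In the later stages the rescaling enforces |G| \<le> \<kappa>\<surd>m2 by construction, so neither the
  interpolation nodes nor the regularity of U0 matter. Induction over the time steps
  concludes, once periodicity has extended the bound on U0 from the box to all of \<real>^d.\<close>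

section \<open>The heat semigroup is a sup-norm contraction\<close>

lemma heat_kernel_nonneg: "0 \<le> heat_kernel eps t z"
  unfolding heat_kernel_def by simp

lemma heat_kernel_eq_prod_normal_density:
  fixes x y :: "real^'d"
  assumes "eps > 0" "t > 0"
  shows "heat_kernel eps t (x - y) =
    (\<Prod>b\<in>Basis. normal_density (x \<bullet> b) (sqrt (2 * eps\<^sup>2 * t)) (y \<bullet> b))"
proof -
  define a where "a = 4 * pi * eps\<^sup>2 * t"
  have a: "a > 0" using assms by (simp add: a_def)
  have sq: "(sqrt (2 * eps\<^sup>2 * t))\<^sup>2 = 2 * eps\<^sup>2 * t" using assms by simp
  have density: "normal_density (x \<bullet> b) (sqrt (2 * eps\<^sup>2 * t)) (y \<bullet> b)
      = (1 / sqrt a) * exp (- (((x - y) \<bullet> b)\<^sup>2) / (4 * eps\<^sup>2 * t))" for b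
    unfolding normal_density_def sq a_def
    by (simp add: inner_diff_left power2_commute mult.assoc)
  have "(\<Prod>b\<in>Basis. normal_density (x \<bullet> b) (sqrt (2 * eps\<^sup>2 * t)) (y \<bullet> b))
      = (1 / sqrt a) ^ CARD('d) *
        exp (\<Sum>b\<in>Basis. - (((x - y) \<bullet> b)\<^sup>2) / (4 * eps\<^sup>2 * t))"
    unfolding density prod.distrib prod_constant by (simp add: exp_sum)
  also have "(\<Sum>b\<in>(Basis::(real^'d) set). - (((x - y) \<bullet> b)\<^sup>2) / (4 * eps\<^sup>2 * t))
      = - ((norm (x - y))\<^sup>2) / (4 * eps\<^sup>2 * t)"
  proof -
    have "(norm (x - y))\<^sup>2 = (\<Sum>b\<in>(Basis::(real^'d) set). ((x - y) \<bullet> b)\<^sup>2)"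
      unfolding power2_norm_eq_inner by (subst euclidean_inner) (simp add: power2_eq_square)
    then show ?thesis by (simp add: sum_divide_distrib[symmetric] sum_negf)
  qed
  also have "(1 / sqrt a) ^ CARD('d) = a powr (- real CARD('d) / 2)"
  proof -
    have "1 / sqrt a = a powr (- (1/2))"
      using a by (simp only: powr_minus_divide powr_half_sqrt less_imp_le)
    then have "(1 / sqrt a) ^ CARD('d) = a powr (real CARD('d) * (- (1/2)))"
      using a by (simp only: powr_power)
    then show ?thesis by simp
  qed
  finally show ?thesis unfolding heat_kernel_def a_def by simp
qed

lemma heat_kernel_has_integral_1:
  fixes x :: "real^'d"
  assumes "eps > 0" "t > 0"
  shows "((\<lambda>y. heat_kernel eps t (x - y)) has_integral 1) UNIV"
proof -
  define \<sigma> where "\<sigma> = sqrt (2 * eps\<^sup>2 * t)"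
  have "\<sigma> > 0" unfolding \<sigma>_def using assms by simp
  then have normal_1: "(\<integral>\<^sup>+u. ennreal (normal_density c \<sigma> u) \<partial>lborel) = 1" for c
    by (subst nn_integral_eq_integral) (auto simp: integrable_normal_density integral_normal_density)
  have "(\<integral>\<^sup>+y. ennreal (\<Prod>b\<in>Basis. normal_density (x \<bullet> b) \<sigma> (y \<bullet> b)) \<partial>lborel)
      = (\<integral>\<^sup>+y. (\<Prod>b\<in>(Basis::(real^'d) set). ennreal (normal_density (x \<bullet> b) \<sigma> (y \<bullet> b))) \<partial>lborel)"
    by (simp add: prod_ennreal)
  also have "\<dots> = (\<Prod>b\<in>(Basis::(real^'d) set). \<integral>\<^sup>+u. ennreal (normal_density (x \<bullet> b) \<sigma> u) \<partial>lborel)"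
    by (rule nn_integral_lborel_prod) auto
  also have "\<dots> = ennreal 1" by (simp add: normal_1)
  finally show ?thesis
    unfolding heat_kernel_eq_prod_normal_density[OF assms] \<sigma>_def[symmetric]
    by (intro nn_integral_has_integral) (auto intro: prod_nonneg)
qed

text \<open>Unlike \<open>integral_norm_bound_integral\<close>, this does not require \<open>f\<close> to be
  integrable: if it is not, its integral is the junk value \<open>0\<close>.\<close>
lemma norm_integral_le_integral:
  fixes f :: "'n::euclidean_space \<Rightarrow> 'a::banach"
  assumes "g integrable_on S" "\<And>x. x \<in> S \<Longrightarrow> norm (f x) \<le> g x"
  shows "norm (integral S f) \<le> integral S g"
proof (cases "f integrable_on S")
  case True
  then show ?thesis using assms integral_norm_bound_integral by blast
next
  case False
  have "0 \<le> integral S g"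
    using assms by (intro integral_nonneg) (auto intro: order_trans[OF norm_ge_zero])
  then show ?thesis using False by (simp add: not_integrable_integral)
qed

lemma norm_heat_sg_le:
  fixes g :: "real^'d \<Rightarrow> 'v::euclidean_space"
  assumes "eps > 0" "t \<ge> 0" "\<And>y. norm (g y) \<le> C"
  shows "norm (heat_sg eps t g x) \<le> C"
proof (cases "t = 0")
  case True
  then show ?thesis using assms by (simp add: heat_sg_def)
next
  case False
  then have "t > 0" using assms by simp
  then have kernel_C: "((\<lambda>y. heat_kernel eps t (x - y) * C) has_integral C) UNIV"
    using has_integral_mult_left[OF heat_kernel_has_integral_1[OF assms(1)]] by simp
  have "norm (integral UNIV (\<lambda>y. heat_kernel eps t (x - y) *\<^sub>R g y))
      \<le> integral UNIV (\<lambda>y. heat_kernel eps t (x - y) * C)"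
    using kernel_C by (intro norm_integral_le_integral)
      (auto intro!: mult_left_mono assms(3) simp: heat_kernel_nonneg)
  also have "\<dots> = C" using kernel_C by (rule integral_unique)
  finally show ?thesis using False by (simp add: heat_sg_def)
qed

lemma norm_semigroupL_le:
  fixes g :: "real^'d \<Rightarrow> 'v::euclidean_space"
  assumes "eps > 0" "t \<ge> 0" "\<And>y. norm (g y) \<le> C"
  shows "norm (semigroupL eps \<kappa> t g x) \<le> exp (- \<kappa> * t) * C"
  unfolding semigroupL_def using norm_heat_sg_le[OF assms, where x=x]
  by (simp add: mult_left_mono)

lemma exp_decay_has_integral:
  fixes \<kappa> s M :: real
  assumes "s \<ge> 0"
  shows "((\<lambda>\<sigma>. exp (- \<kappa> * (s - \<sigma>)) * (\<kappa> * M)) has_integral M - M * exp (- \<kappa> * s)) {0..s}"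
proof -
  have "((\<lambda>\<sigma>. exp (- \<kappa> * (s - \<sigma>)) * (\<kappa> * M)) has_integral
        M * exp (- \<kappa> * (s - s)) - M * exp (- \<kappa> * (s - 0))) {0..s}"
    using assms
    by (intro fundamental_theorem_of_calculus)
       (auto intro!: derivative_eq_intros simp: has_real_derivative_iff_has_vector_derivative[symmetric])
  then show ?thesis by simp
qed

lemma norm_duhamel_le:
  fixes U :: "real^'d \<Rightarrow> 'v::euclidean_space"
  assumes "eps > 0" "s \<ge> 0"
    and "\<And>y. norm (U y) \<le> M"
    and "\<And>\<sigma> y. \<sigma> \<in> {0..s} \<Longrightarrow> norm (G \<sigma> y) \<le> \<kappa> * M"
  shows "norm (semigroupL eps \<kappa> s U x
           + integral {0..s} (\<lambda>\<sigma>. semigroupL eps \<kappa> (s - \<sigma>) (G \<sigma>) x)) \<le> M"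
proof -
  have "norm (integral {0..s} (\<lambda>\<sigma>. semigroupL eps \<kappa> (s - \<sigma>) (G \<sigma>) x))
      \<le> integral {0..s} (\<lambda>\<sigma>. exp (- \<kappa> * (s - \<sigma>)) * (\<kappa> * M))"
    using exp_decay_has_integral[OF assms(2)]
    by (intro norm_integral_le_integral norm_semigroupL_le assms) auto
  also have "\<dots> = M - M * exp (- \<kappa> * s)"
    using exp_decay_has_integral[OF assms(2)] by (rule integral_unique)
  finally have "norm (integral {0..s} (\<lambda>\<sigma>. semigroupL eps \<kappa> (s - \<sigma>) (G \<sigma>) x))
      \<le> M - M * exp (- \<kappa> * s)" .
  moreover have "norm (semigroupL eps \<kappa> s U x) \<le> exp (- \<kappa> * s) * M"
    using assms(1-3) by (rule norm_semigroupL_le)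
  ultimately have "norm (semigroupL eps \<kappa> s U x)
      + norm (integral {0..s} (\<lambda>\<sigma>. semigroupL eps \<kappa> (s - \<sigma>) (G \<sigma>) x)) \<le> M"
    by (simp add: mult.commute)
  then show ?thesis by (rule norm_triangle_le)
qed

section \<open>A Frobenius-norm bound for the nonlinearity\<close>

lemma power2_norm_matrix: "(norm (A :: real^'n^'m))\<^sup>2 = (\<Sum>i\<in>UNIV. \<Sum>j\<in>UNIV. (A$i$j)\<^sup>2)"
  by (simp add: norm_vec_def L2_set_def sum_nonneg)

lemma frob_norm_eq_norm: "frob_norm A = norm A"
  unfolding frob_norm_def power2_norm_matrix[symmetric] by simp

lemma inner_matrix_mult_transpose:
  fixes X :: "real^'n^'m" and Y :: "real^'p^'m" and M :: "real^'n^'p"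
  shows "inner X (Y ** M) = inner (transpose Y ** X) M"
proof -
  have "inner X (Y ** M) = (\<Sum>i\<in>UNIV. \<Sum>j\<in>UNIV. \<Sum>k\<in>UNIV. X$i$j * Y$i$k * M$k$j)"
    by (simp add: inner_vec_def matrix_matrix_mult_def sum_distrib_left mult.assoc)
  also have "\<dots> = (\<Sum>i\<in>UNIV. \<Sum>k\<in>UNIV. \<Sum>j\<in>UNIV. X$i$j * Y$i$k * M$k$j)"
    by (intro sum.cong refl sum.swap)
  also have "\<dots> = (\<Sum>k\<in>UNIV. \<Sum>j\<in>UNIV. \<Sum>i\<in>UNIV. X$i$j * Y$i$k * M$k$j)"
    by (subst sum.swap) (intro sum.cong refl sum.swap)
  also have "\<dots> = inner (transpose Y ** X) M"
    by (simp add: inner_vec_def matrix_matrix_mult_def transpose_def sum_distrib_left mult_ac)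
  finally show ?thesis .
qed

lemma norm_matrix_mult_le:
  fixes X :: "real^'p^'m" and Y :: "real^'n^'p"
  shows "norm (X ** Y) \<le> norm X * norm Y"
proof -
  have "(norm (X ** Y))\<^sup>2 = (\<Sum>i\<in>UNIV. \<Sum>k\<in>UNIV. (inner (X$i) (column k Y))\<^sup>2)"
    by (simp add: power2_norm_matrix matrix_matrix_mult_def inner_vec_def column_def)
  also have "\<dots> \<le> (\<Sum>i\<in>UNIV. \<Sum>k\<in>UNIV. (norm (X$i))\<^sup>2 * (norm (column k Y))\<^sup>2)"
    by (intro sum_mono) (metis Cauchy_Schwarz_ineq power2_norm_eq_inner)
  also have "\<dots> = (\<Sum>i\<in>UNIV. (norm (X$i))\<^sup>2) * (\<Sum>k\<in>UNIV. (norm (column k Y))\<^sup>2)"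
    by (rule sum_product[symmetric])
  also have "(\<Sum>i\<in>UNIV. (norm (X$i))\<^sup>2) = (norm X)\<^sup>2"
    by (simp add: norm_vec_def L2_set_def sum_nonneg)
  also have "(\<Sum>k\<in>UNIV. (norm (column k Y))\<^sup>2) = (\<Sum>k\<in>UNIV. \<Sum>j\<in>UNIV. (Y$j$k)\<^sup>2)"
    by (simp add: column_def norm_vec_def L2_set_def sum_nonneg)
  also have "\<dots> = (norm Y)\<^sup>2"
    unfolding power2_norm_matrix by (rule sum.swap)
  finally have "(norm (X ** Y))\<^sup>2 \<le> (norm X * norm Y)\<^sup>2"
    by (simp add: power_mult_distrib)
  then show ?thesis by (rule power2_le_imp_le) simp
qed

lemma inner_mat_1_self: "inner (mat 1 :: real^'n^'n) (mat 1) = real CARD('n)"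
  by (simp add: inner_vec_def mat_def if_distrib[of "\<lambda>x. x * _"] cong: if_cong)

lemma norm_fnl_le: "norm (fnl U) \<le> norm U * norm (transpose U ** U - mat 1)"
proof -
  have "U ** (transpose U ** U - mat 1) + U = U ** transpose U ** U"
    using matrix_add_ldistrib[of U "transpose U ** U - mat 1" "mat 1"] by (simp add: matrix_mul_assoc)
  then have "fnl U = - (U ** (transpose U ** U - mat 1))"
    unfolding fnl_def by (simp add: algebra_simps)
  then show ?thesis using norm_matrix_mult_le by (metis norm_minus_cancel)
qed

lemma inner_fnl: "inner U (fnl U) = (norm U)\<^sup>2 - (norm (transpose U ** U))\<^sup>2"
  using inner_matrix_mult_transpose[of U U "transpose U ** U"]
  by (simp add: fnl_def matrix_mul_assoc inner_diff_right power2_norm_eq_inner)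

lemma power2_norm_Nop:
  "(norm (Nop \<kappa> U))\<^sup>2 = \<kappa>\<^sup>2 * (norm U)\<^sup>2 + 2 * \<kappa> * inner U (fnl U) + (norm (fnl U))\<^sup>2"
  unfolding Nop_def power2_norm_eq_inner inner_add_left inner_add_right inner_scaleR_left
    inner_scaleR_right inner_commute[of "fnl U" U]
  by (simp add: power2_eq_square algebra_simps)

text \<open>The paper's hypothesis \<kappa> \<ge> 3/2 m2 - 1 enters only through its consequence m2 \<le> 2\<kappa>.\<close>
lemma norm_Nop_le:
  fixes U :: "real^'n^'m"
  assumes U: "norm U \<le> sqrt (real CARD('n))" and "2 \<le> \<kappa>" and "real CARD('n) \<le> 2 * \<kappa>"
  shows "norm (Nop \<kappa> U) \<le> \<kappa> * sqrt (real CARD('n))"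
proof -
  define m where "m = real CARD('n)"
  define A where "A = transpose U ** U"
  define s1 s2 where "s1 = (norm U)\<^sup>2" and "s2 = (norm A)\<^sup>2"
  have s1_le: "s1 \<le> m"
    using U unfolding s1_def m_def by (metis norm_ge_zero of_nat_0_le_iff power_mono real_sqrt_pow2)
  have "inner A (mat 1) = s1"
    using inner_matrix_mult_transpose[of U U "mat 1"] by (simp add: A_def s1_def power2_norm_eq_inner)
  then have norm_A_I: "(norm (A - mat 1))\<^sup>2 = s2 - 2 * s1 + m"
    by (simp add: power2_norm_eq_inner inner_diff_left inner_diff_right inner_commute[of "mat 1" A]
        inner_mat_1_self s2_def m_def)
  have "(norm (fnl U))\<^sup>2 \<le> s1 * (norm (A - mat 1))\<^sup>2"
    using power_mono[OF norm_fnl_le[of U] norm_ge_zero, of 2]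
    by (simp add: s1_def A_def power_mult_distrib)
  also have "\<dots> \<le> 2 * \<kappa> * (norm (A - mat 1))\<^sup>2"
    using s1_le assms(3) by (intro mult_right_mono) (auto simp: m_def)
  finally have fnl_sq: "(norm (fnl U))\<^sup>2 \<le> 2 * \<kappa> * (s2 - 2 * s1 + m)"
    by (simp only: norm_A_I)
  have "(norm (Nop \<kappa> U))\<^sup>2 = \<kappa>\<^sup>2 * s1 + 2 * \<kappa> * (s1 - s2) + (norm (fnl U))\<^sup>2"
    unfolding power2_norm_Nop inner_fnl s1_def s2_def A_def ..
  also have "\<dots> \<le> (\<kappa>\<^sup>2 - 2 * \<kappa>) * s1 + 2 * \<kappa> * m"
    using fnl_sq by (simp add: algebra_simps)
  also have "\<dots> \<le> (\<kappa>\<^sup>2 - 2 * \<kappa>) * m + 2 * \<kappa> * m"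
  proof -
    have "2 * \<kappa> \<le> \<kappa>\<^sup>2"
      using mult_right_mono[OF assms(2), of \<kappa>] assms(2) by (simp add: power2_eq_square)
    then show ?thesis using s1_le by (simp add: mult_left_mono)
  qed
  also have "\<dots> = (\<kappa> * sqrt m)\<^sup>2"
    by (simp add: m_def power_mult_distrib algebra_simps)
  finally have "(norm (Nop \<kappa> U))\<^sup>2 \<le> (\<kappa> * sqrt m)\<^sup>2" .
  moreover have "0 \<le> \<kappa> * sqrt m" using assms(2) by (simp add: m_def)
  ultimately show ?thesis unfolding m_def by (rule power2_le_imp_le)
qed

lemma continuous_on_interp_poly:
  fixes y :: "nat \<Rightarrow> 'v::real_normed_vector"
  shows "continuous_on S (interp_poly t y j)"
  unfolding interp_poly_def divide_inverse
  by (intro continuous_on_sum continuous_on_scaleR continuous_on_prod continuous_on_mult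
      continuous_on_diff continuous_on_const continuous_on_id)

lemma norm_rescale_scaleR_le:
  fixes Q :: "real \<Rightarrow> real^'n^'m"
  assumes "continuous_on {0..\<tau>} Q" "\<sigma> \<in> {0..\<tau>}" "0 \<le> \<kappa>" "0 \<le> m"
  shows "norm (rescale \<kappa> m \<tau> Q *\<^sub>R Q \<sigma>) \<le> \<kappa> * sqrt m"
proof -
  define M where "M = (SUP s\<in>{0..\<tau>}. norm (Q s))"
  have "bdd_above ((\<lambda>s. norm (Q s)) ` {0..\<tau>})"
    using assms(1) by (intro bounded_imp_bdd_above compact_imp_bounded compact_continuous_image
        continuous_intros) auto
  then have le_M: "norm (Q \<sigma>) \<le> M"
    unfolding M_def by (rule cSUP_upper[OF assms(2)])
  have bound_nonneg: "0 \<le> \<kappa> * sqrt m" using assms(3,4) by simp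
  show ?thesis
  proof (cases "M = 0")
    case True
    then show ?thesis using le_M bound_nonneg by (simp add: rescale_def frob_norm_eq_norm M_def[symmetric])
  next
    case False
    then have "M > 0" using le_M norm_ge_zero order_trans less_eq_real_def by metis
    then have "min (\<kappa> * sqrt m / M) 1 * norm (Q \<sigma>) \<le> \<kappa> * sqrt m / M * M"
      using le_M bound_nonneg by (intro mult_mono) auto
    then show ?thesis
      using False \<open>M > 0\<close> bound_nonneg by (simp add: rescale_def frob_norm_eq_norm M_def[symmetric])
  qed
qed

section \<open>Periodic functions\<close>

lemma periodic_shift_int:
  fixes f :: "'a::real_vector \<Rightarrow> 'b"
  assumes "\<And>x. f (x + v) = f x"
  shows "f (x + of_int n *\<^sub>R v) = f x"
proof (induction n rule: int_induct[where k = 0])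
  case base
  then show ?case by simp
next
  case (step1 i)
  have "f (x + of_int (i + 1) *\<^sub>R v) = f ((x + of_int i *\<^sub>R v) + v)"
    by (simp add: algebra_simps)
  then show ?case using assms step1.IH by simp
next
  case (step2 i)
  have "f (x + of_int i *\<^sub>R v) = f ((x + of_int (i - 1) *\<^sub>R v) + v)"
    by (simp add: algebra_simps)
  then show ?case using assms step2.IH by simp
qed

lemma periodic_shift_sum:
  fixes f :: "'a::real_vector \<Rightarrow> 'b"
  assumes "\<And>x i. f (x + v i) = f x" "finite S"
  shows "f (x + (\<Sum>i\<in>S. of_int (k i) *\<^sub>R v i)) = f x"
  using assms(2)
proof (induction S arbitrary: x rule: finite_induct)
  case empty
  then show ?case by simp
next
  case (insert j S)
  have "f (x + (\<Sum>i\<in>insert j S. of_int (k i) *\<^sub>R v i))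
      = f ((x + of_int (k j) *\<^sub>R v j) + (\<Sum>i\<in>S. of_int (k i) *\<^sub>R v i))"
    using insert(1,2) by (simp add: add_ac)
  also have "\<dots> = f x" using insert.IH periodic_shift_int assms(1) by metis
  finally show ?case .
qed

text \<open>Every point is a lattice translate of a point of the closed period box.\<close>
lemma periodic_norm_le:
  fixes f :: "real^'d \<Rightarrow> 'v::real_normed_vector" and lo hi :: "real^'d"
  assumes "\<forall>i. lo$i < hi$i"
    and "\<forall>x i. f (x + (hi$i - lo$i) *\<^sub>R axis i 1) = f x"
    and "\<forall>x\<in>cbox lo hi. norm (f x) \<le> C"
  shows "norm (f x) \<le> C"
proof -
  define L where "L i = hi$i - lo$i" for i
  have L_pos: "L i > 0" for i using assms(1) by (simp add: L_def)
  define k where "k i = - \<lfloor>(x$i - lo$i) / L i\<rfloor>" for i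
  define y where "y = x + (\<chi> i. of_int (k i) * L i)"
  have y_coord: "y$i = lo$i + frac ((x$i - lo$i) / L i) * L i" for i
    using L_pos[of i] by (simp add: y_def k_def frac_def field_simps)
  have "y \<in> cbox lo hi"
    unfolding mem_box_cart
  proof
    fix i
    have "0 \<le> frac ((x$i - lo$i) / L i) * L i" using L_pos[of i] by (simp add: frac_ge_0)
    moreover have "frac ((x$i - lo$i) / L i) * L i \<le> L i"
      using L_pos[of i] by (intro mult_left_le_one_le) (auto intro: less_imp_le frac_lt_1)
    ultimately show "lo$i \<le> y$i \<and> y$i \<le> hi$i" unfolding y_coord by (simp add: L_def)
  qed
  moreover have "f y = f x"
  proof -
    have shift: "(\<chi> i. of_int (k i) * L i) = (\<Sum>i\<in>UNIV. of_int (k i) *\<^sub>R (L i *\<^sub>R axis i 1))"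
      using basis_expansion[of "\<chi> i. of_int (k i) * L i"] by (simp add: scalar_mult_eq_scaleR)
    show ?thesis
      unfolding y_def shift by (rule periodic_shift_sum) (use assms(2) in \<open>auto simp: L_def\<close>)
  qed
  ultimately show ?thesis using assms(3) by metis
qed

lemma norm_etd_stage_le:
  fixes U :: "real^'d \<Rightarrow> real^'m2^'m1"
  assumes "eps > 0" "2 \<le> \<kappa>" "real CARD('m2) \<le> 2 * \<kappa>" "s \<in> {0..\<tau>}"
    and "\<And>y. norm (U y) \<le> sqrt (real CARD('m2))"
  shows "norm (etd_stage eps \<kappa> a \<tau> U j s x) \<le> sqrt (real CARD('m2))"
proof (cases j)
  case 0
  then show ?thesis using assms by (auto intro!: norm_duhamel_le norm_Nop_le)
next
  case (Suc i)
  show ?thesis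
    unfolding Suc etd_stage.simps Let_def
    using assms by (intro norm_duhamel_le norm_rescale_scaleR_le continuous_on_interp_poly) auto
qed

lemma norm_etd_iter_le:
  fixes U0 :: "real^'d \<Rightarrow> real^'m2^'m1"
  assumes "eps > 0" "2 \<le> \<kappa>" "real CARD('m2) \<le> 2 * \<kappa>" "0 \<le> \<tau>"
    and "\<And>y. norm (U0 y) \<le> sqrt (real CARD('m2))"
  shows "norm (etd_iter eps \<kappa> a \<tau> r U0 n x) \<le> sqrt (real CARD('m2))"
proof (induction n arbitrary: x)
  case 0
  then show ?case using assms(5) by simp
next
  case (Suc n)
  then show ?case using assms(1-4) by (simp add: norm_etd_stage_le)
qed

theorem theorem3p1:
  fixes lo hi :: "real^'d" and eps \<kappa> \<tau> :: real and a :: "nat \<Rightarrow> nat \<Rightarrow> real"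
    and r :: nat and U0 :: "real^'d \<Rightarrow> real^'m2^'m1"
  assumes "CARD('d) \<le> 3"
    and "CARD('m2) \<le> CARD('m1)"
    and "\<forall>i. lo$i < hi$i"
    and "eps > 0"
    and "\<forall>j\<ge>1. a j 0 = 0 \<and> a j j = 1 \<and> (\<forall>k<j. a j k < a j (Suc k))"
    and "r \<ge> 1"
    and "\<kappa> \<ge> max (3/2 * real CARD('m2) - 1) 2"
    and "continuous_on UNIV U0"
    and "\<forall>x i. U0 (x + (hi$i - lo$i) *\<^sub>R axis i 1) = U0 x"
    and "\<forall>x\<in>cbox lo hi. frob_norm (U0 x) \<le> sqrt (real CARD('m2))"
    and "\<tau> > 0"
  shows "\<forall>n\<ge>1. \<forall>x\<in>box lo hi.
           frob_norm (etd_iter eps \<kappa> a \<tau> r U0 n x) \<le> sqrt (real CARD('m2))"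
proof -
  have "real CARD('m2) \<ge> 1" by (simp add: Suc_le_eq)
  then have "2 \<le> \<kappa>" and "real CARD('m2) \<le> 2 * \<kappa>" using assms(7) by auto
  moreover have "norm (U0 y) \<le> sqrt (real CARD('m2))" for y
    using periodic_norm_le[OF assms(3,9)] assms(10) by (simp add: frob_norm_eq_norm)
  ultimately have "norm (etd_iter eps \<kappa> a \<tau> r U0 n x) \<le> sqrt (real CARD('m2))" for n x
    using assms(4,11) by (intro norm_etd_iter_le) auto
  then show ?thesis by (simp add: frob_norm_eq_norm)
qed

end
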